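(* Let $A$ be an abelian topological group such that $\alpha_A$ is injective, and let $K$ be a compact subgroup of $A$. Then $K$ is dually closed in $A$ (i.e. $K^{\vartriangleright\vartriangleleft}=K$) and dually embedded in $A$ (i.e. every continuous character of $K$ extends to a continuous character of $A$).
   Context: $\mathbb{T}=\mathbb{R}/\mathbb{Z}$, $\Lambda_1$ is the image of $[-\tfrac14,\tfrac14]$ in $\mathbb{T}$. $\hat A$ is the group of continuous homomorphisms $A\to\mathbb{T}$ with the compact-open topology and $\alpha_A\colon A\to\hat{\hat A}$, $\alpha_A(a)(\chi)=\chi(a)$. For $S\subseteq A$, $S^\vartriangleright=\{\chi\in\hat A\mid\chi(S)\subseteq\Lambda_1\}$; for $\Phi\subseteq\hat A$, $\Phi^\vartriangleleft=\{a\in A\mid\chi(a)\in\Lambda_1\ \forall\chi\in\Phi\}$. *)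

theory Defs
  imports "HOL-Analysis.Analysis"
begin

text \<open>The circle group T = R/Z, realised as the unit circle in the complex plane via
  the topological isomorphism t mod 1 to cis (2 pi t).  Its group operation is complex
  multiplication, with neutral element 1.\<close>

definition circleT :: "complex set" where
  "circleT = {z. cmod z = 1}"

definition Lambda1 :: "complex set" where
  "Lambda1 = (\<lambda>t. cis (2 * pi * t)) ` {-1/4 .. 1/4}"

definition is_subgroup :: "'a::ab_group_add set \<Rightarrow> bool" where
  "is_subgroup K \<longleftrightarrow> 0 \<in> K \<and> (\<forall>x\<in>K. \<forall>y\<in>K. x + y \<in> K) \<and> (\<forall>x\<in>K. - x \<in> K)"

text \<open>Continuous characters of the subgroup S (with the subspace topology) into T.
  Values outside S are irrelevant.\<close>
definition is_char :: "'a::topological_ab_group_add set \<Rightarrow> ('a \<Rightarrow> complex) \<Rightarrow> bool" where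
  "is_char S c \<longleftrightarrow> continuous_on S c \<and> c ` S \<subseteq> circleT \<and>
     (\<forall>x\<in>S. \<forall>y\<in>S. c (x + y) = c x * c y)"

text \<open>The dual group of A (A the whole type).\<close>
definition dual :: "('a::topological_ab_group_add \<Rightarrow> complex) set" where
  "dual = {c. is_char UNIV c}"

definition alpha :: "'a::topological_ab_group_add \<Rightarrow> ('a \<Rightarrow> complex) \<Rightarrow> complex" where
  "alpha a = (\<lambda>c \<in> dual. c a)"

definition polar_r :: "'a::topological_ab_group_add set \<Rightarrow> ('a \<Rightarrow> complex) set" where
  "polar_r S = {c \<in> dual. c ` S \<subseteq> Lambda1}"

definition polar_l :: "('a::topological_ab_group_add \<Rightarrow> complex) set \<Rightarrow> 'a set" where
  "polar_l \<Phi> = {a. \<forall>c\<in>\<Phi>. c a \<in> Lambda1}"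

definition dually_closed :: "'a::topological_ab_group_add set \<Rightarrow> bool" where
  "dually_closed K \<longleftrightarrow> polar_l (polar_r K) = K"

definition dually_embedded :: "'a::topological_ab_group_add set \<Rightarrow> bool" where
  "dually_embedded K \<longleftrightarrow>
     (\<forall>c. is_char K c \<longrightarrow> (\<exists>d\<in>dual. \<forall>x\<in>K. d x = c x))"

end

theory Submission
  imports Defs
begin

(* Since alpha is injective, the continuous characters separate the points of A; by the
   Stone-Weierstrass theorem on the image of A in the Hausdorff product space indexed by the
   dual group, every continuous function on a compact subset of A is then a uniform limit of
   trigonometric polynomials (linear combinations of characters).  If the function is
   invariant under translation by a compact subgroup K, averaging the approximant along long
   orbits x, x + k, ..., x + (N - 1) k with k in K shrinks the coefficients of all characters
   that are non-trivial on K without spoiling the approximation; this averaging replaces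
   integration against the Haar measure of K.  Hence such a function is approximated by a
   combination of characters that are trivial on K.

   For a outside K, approximate the function that is 0 on K and 1 on a + K.  Since Lambda_1
   contains no non-trivial subgroup of T, characters trivial on K are 1 on the double polar of
   K, so they cannot tell a from 0: contradiction.  For a character psi of K without extension,
   approximate psi on K and multiply by the conjugate of psi: this approximates the constant 1
   on K by characters of K none of which is trivial, again a contradiction. *)

section \<open>A Hausdorff product space\<close>

(* A copy of the function space with the product topology.  The class t2_space cannot be
   instantiated for the function type itself, which already carries a metric space instance
   for countable index types. *)
typedef ('i, 'b) prod_space = "UNIV :: ('i \<Rightarrow> 'b) set"
  morphisms coords to_prod_space
  by simp

instantiation prod_space :: (type, topological_space) topological_space
begin

definition open_prod_space :: "('i, 'b) prod_space set \<Rightarrow> bool" where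
  "open_prod_space U \<longleftrightarrow> open (to_prod_space -` U)"

instance
proof
  fix S T :: "('i, 'b) prod_space set"
  assume "open S" "open T"
  then show "open (S \<inter> T)" by (simp add: open_prod_space_def open_Int)
next
  fix \<U> :: "('i, 'b) prod_space set set"
  assume "\<forall>U\<in>\<U>. open U"
  then show "open (\<Union>\<U>)" by (auto simp: open_prod_space_def vimage_Union)
qed (simp add: open_prod_space_def)

end

lemma continuous_on_to_prod_space: "continuous_on S to_prod_space"
proof -
  have "continuous_on UNIV to_prod_space"
    by (simp add: continuous_on_open_vimage open_prod_space_def)
  then show ?thesis
    using continuous_on_subset by blast
qed

lemma open_vimage_coords: "open B \<Longrightarrow> open ((\<lambda>y. coords y i) -` B)"
proof -
  assume "open B"
  then have "open ((\<lambda>f. f i) -` B)"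
    using continuous_on_open_vimage[OF open_UNIV, of "\<lambda>f. f i"] by auto
  moreover have "to_prod_space -` (\<lambda>y. coords y i) -` B = (\<lambda>f. f i) -` B"
    by (auto simp: to_prod_space_inverse)
  ultimately show ?thesis
    by (simp add: open_prod_space_def)
qed

lemma continuous_on_coords: "continuous_on S (\<lambda>y. coords y i)"
proof -
  have "continuous_on UNIV (\<lambda>y. coords y i)"
    by (simp add: continuous_on_open_vimage open_vimage_coords)
  then show ?thesis
    using continuous_on_subset by blast
qed

instance prod_space :: (type, t2_space) t2_space
proof
  fix x y :: "('i, 'b) prod_space"
  assume "x \<noteq> y"
  then have "coords x \<noteq> coords y"
    by (simp add: coords_inject)
  then obtain i where "coords x i \<noteq> coords y i"
    by (auto simp: fun_eq_iff)
  from hausdorff[OF this] obtain U V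
    where UV: "open U" "open V" "coords x i \<in> U" "coords y i \<in> V" "U \<inter> V = {}"
    by blast
  show "\<exists>U V. open U \<and> open V \<and> x \<in> U \<and> y \<in> V \<and> U \<inter> V = {}"
  proof (intro exI conjI)
    show "open ((\<lambda>y. coords y i) -` U)" "open ((\<lambda>y. coords y i) -` V)"
      using UV by (simp_all add: open_vimage_coords)
    show "x \<in> (\<lambda>y. coords y i) -` U" "y \<in> (\<lambda>y. coords y i) -` V"
      using UV by simp_all
    show "(\<lambda>y. coords y i) -` U \<inter> (\<lambda>y. coords y i) -` V = {}"
      using UV by auto
  qed
qed

lemma is_subgroupD:
  assumes "is_subgroup K"
  shows "0 \<in> K" and "x \<in> K \<Longrightarrow> y \<in> K \<Longrightarrow> x + y \<in> K"
  using assms by (auto simp: is_subgroup_def)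

lemma subgroup_add_mem_iff:
  assumes "is_subgroup K" and "k \<in> K"
  shows "x + k \<in> K \<longleftrightarrow> x \<in> K"
proof
  assume "x + k \<in> K"
  then have "(x + k) + - k \<in> K"
    using assms unfolding is_subgroup_def by blast
  then show "x \<in> K"
    by simp
qed (use assms in \<open>auto simp: is_subgroup_def\<close>)

lemma is_charD:
  assumes "is_char S c"
  shows "continuous_on S c" and "x \<in> S \<Longrightarrow> cmod (c x) = 1"
    and "x \<in> S \<Longrightarrow> y \<in> S \<Longrightarrow> c (x + y) = c x * c y"
  using assms by (auto simp: is_char_def circleT_def)

lemma dualD:
  assumes "c \<in> dual"
  shows "continuous_on S c" "cmod (c x) = 1" "c (x + y) = c x * c y"
  using is_charD[of UNIV c] continuous_on_subset[of UNIV c S] assms by (auto simp: dual_def)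

lemma dualI:
  assumes "continuous_on UNIV c" "\<And>x. cmod (c x) = 1" "\<And>x y. c (x + y) = c x * c y"
  shows "c \<in> dual"
  using assms by (auto simp: dual_def is_char_def circleT_def)

lemma dual_mult: "c \<in> dual \<Longrightarrow> d \<in> dual \<Longrightarrow> (\<lambda>x. c x * d x) \<in> dual"
  by (rule dualI) (auto simp: dualD norm_mult intro: continuous_intros)

lemma dual_cnj: "c \<in> dual \<Longrightarrow> (\<lambda>x. cnj (c x)) \<in> dual"
  by (rule dualI) (auto simp: dualD intro: continuous_intros)

lemma dual_one: "(\<lambda>x. 1) \<in> dual"
  by (rule dualI) auto

lemma dual_power: "c \<in> dual \<Longrightarrow> (\<lambda>x. c x ^ m) \<in> dual"
  by (induction m) (auto simp: dual_one dual_mult)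

lemma continuous_on_alpha: "continuous_on S alpha"
proof (rule continuous_on_coordinatewise_then_product)
  fix c :: "'a \<Rightarrow> complex"
  show "continuous_on S (\<lambda>x. alpha x c)"
    by (cases "c \<in> dual") (simp_all add: dualD(1) alpha_def)
qed

section \<open>The set Lambda_1\<close>

lemma one_in_Lambda1: "1 \<in> Lambda1"
  unfolding Lambda1_def by (rule image_eqI[of _ _ 0]) auto

lemma Re_nonneg_if_in_Lambda1:
  assumes "w \<in> Lambda1"
  shows "Re w \<ge> 0"
proof -
  obtain t where w: "w = cis (2 * pi * t)" and t: "- (1/4) \<le> t" "t \<le> 1/4"
    using assms unfolding Lambda1_def by auto
  then have "- (pi/2) \<le> 2 * pi * t" and "2 * pi * t \<le> pi/2"
    using mult_left_mono[OF t(1), of "2 * pi"] mult_left_mono[OF t(2), of "2 * pi"] by simp_all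
  with w show ?thesis
    by (simp add: cos_ge_zero)
qed

lemma exists_multiple_in_interval:
  fixes t c :: real
  assumes "0 < t" and "t \<le> 2 * c"
  obtains n :: nat where "n \<ge> 1" and "c < n * t" and "n * t \<le> 2 * c"
proof (cases "c < t")
  case True
  then show ?thesis
    using assms by (intro that[of 1]) auto
next
  case False
  define n where "n = nat \<lfloor>c / t\<rfloor> + 1"
  have "0 \<le> c / t"
    using False assms(1) by simp
  then have "c / t < n" and "n \<le> c / t + 1"
    by (simp_all add: n_def) linarith+
  then have "c < n * t" and "n * t \<le> c + t"
    using assms(1) by (simp_all add: field_simps)
  moreover have "n \<ge> 1"
    by (simp add: n_def)
  ultimately show ?thesis
    using False by (intro that[of n]) auto
qed

lemma eq_1_if_powers_in_Lambda1:
  fixes z :: complex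
  assumes "cmod z = 1" and powers: "\<And>n. n \<ge> 1 \<Longrightarrow> z ^ n \<in> Lambda1"
  shows "z = 1"
proof (rule ccontr)
  assume "z \<noteq> 1"
  have "z \<noteq> 0"
    using assms(1) by auto
  then have z: "z = cis (Arg z)"
    using assms(1) by (simp add: cis_Arg sgn_div_norm)
  define t where "t = \<bar>Arg z\<bar>"
  have "Arg z \<noteq> 0"
    using z \<open>z \<noteq> 1\<close> by auto
  then have "0 < t" and "t \<le> 2 * (pi / 2)"
    using Arg_bounded[of z] by (auto simp: t_def)
  then obtain n :: nat where "n \<ge> 1" and "pi / 2 < n * t" and "n * t \<le> pi"
    by (rule exists_multiple_in_interval) auto
  then have "cos (n * t) < 0"
    by (intro cos_lt_zero_pi) auto
  moreover have "Re (z ^ n) = cos (n * t)"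
    by (subst z) (simp add: Complex.DeMoivre t_def abs_if)
  ultimately show False
    using Re_nonneg_if_in_Lambda1[OF powers[OF \<open>n \<ge> 1\<close>]] by simp
qed

lemma char_trivial_on_polar_polar:
  assumes "a \<in> polar_l (polar_r K)" and "c \<in> dual" and "\<forall>k\<in>K. c k = 1"
  shows "c a = 1"
proof (rule eq_1_if_powers_in_Lambda1)
  show "cmod (c a) = 1"
    using \<open>c \<in> dual\<close> by (rule dualD)
  fix m :: nat
  have "(\<lambda>x. c x ^ m) \<in> polar_r K"
    using dual_power[OF \<open>c \<in> dual\<close>] assms(3) one_in_Lambda1 by (auto simp: polar_r_def)
  then show "c a ^ m \<in> Lambda1"
    using assms(1) by (auto simp: polar_l_def)
qed

section \<open>Trigonometric polynomials\<close>

inductive trig_poly :: "('a::topological_ab_group_add \<Rightarrow> complex) \<Rightarrow> bool" where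
  trig_poly_zero: "trig_poly (\<lambda>x. 0)"
| trig_poly_add_char: "trig_poly g \<Longrightarrow> c \<in> dual \<Longrightarrow> trig_poly (\<lambda>x. g x + \<beta> * c x)"

lemma trig_polyE:
  assumes "trig_poly h"
  obtains n :: nat and b e where "\<And>i. e i \<in> dual" "h = (\<lambda>x. \<Sum>i<n. b i * e i x)"
  using assms
proof (induction arbitrary: thesis)
  case trig_poly_zero
  show ?case
    by (rule trig_poly_zero.prems[where n = 0 and e = "\<lambda>_ _. 1"]) (simp_all add: dual_one)
next
  case (trig_poly_add_char g c \<beta>)
  obtain n :: nat and b e where e: "\<And>i. e i \<in> dual" and g: "g = (\<lambda>x. \<Sum>i<n. b i * e i x)"
    using trig_poly_add_char.IH by blast
  show ?case
  proof (rule trig_poly_add_char.prems)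
    show "(e(n := c)) i \<in> dual" for i
      using e \<open>c \<in> dual\<close> by simp
    show "(\<lambda>x. g x + \<beta> * c x) = (\<lambda>x. \<Sum>i<Suc n. (b(n := \<beta>)) i * (e(n := c)) i x)"
      by (auto simp: g intro!: sum.cong)
  qed
qed

lemma trig_poly_char: "c \<in> dual \<Longrightarrow> trig_poly (\<lambda>x. \<beta> * c x)"
  using trig_poly_add_char[OF trig_poly_zero] by simp

lemma trig_poly_const: "trig_poly (\<lambda>x. \<beta>)"
  using trig_poly_char[OF dual_one] by simp

lemma trig_poly_add:
  assumes "trig_poly f" "trig_poly g"
  shows "trig_poly (\<lambda>x. f x + g x)"
  using assms(2)
proof (induction g rule: trig_poly.induct)
  case (trig_poly_add_char g c \<beta>)
  then show ?case
    using trig_poly.trig_poly_add_char[of "\<lambda>x. f x + g x" c \<beta>] by (simp add: add.assoc)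
qed (simp add: assms(1))

lemma trig_poly_scale: "trig_poly g \<Longrightarrow> trig_poly (\<lambda>x. \<gamma> * g x)"
proof (induction g rule: trig_poly.induct)
  case (trig_poly_add_char g c \<beta>)
  then show ?case
    using trig_poly.trig_poly_add_char[of "\<lambda>x. \<gamma> * g x" c "\<gamma> * \<beta>"]
    by (simp add: distrib_left mult.assoc)
qed (simp add: trig_poly_zero)

lemma trig_poly_mult_char: "trig_poly g \<Longrightarrow> c \<in> dual \<Longrightarrow> trig_poly (\<lambda>x. g x * c x)"
proof (induction g rule: trig_poly.induct)
  case (trig_poly_add_char g d \<beta>)
  then show ?case
    using trig_poly.trig_poly_add_char[OF _ dual_mult, of "\<lambda>x. g x * c x" d c \<beta>]
    by (simp add: distrib_right mult.assoc)
qed (simp add: trig_poly_zero)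

lemma trig_poly_mult:
  assumes "trig_poly f" "trig_poly g"
  shows "trig_poly (\<lambda>x. f x * g x)"
  using assms(2)
proof (induction g rule: trig_poly.induct)
  case (trig_poly_add_char g c \<beta>)
  then have "trig_poly (\<lambda>x. f x * g x + \<beta> * (f x * c x))"
    using assms(1) by (intro trig_poly_add trig_poly_scale trig_poly_mult_char[of f c])
  then show ?case
    by (simp add: algebra_simps)
qed (simp add: trig_poly_zero)

lemma trig_poly_cnj: "trig_poly g \<Longrightarrow> trig_poly (\<lambda>x. cnj (g x))"
proof (induction g rule: trig_poly.induct)
  case (trig_poly_add_char g c \<beta>)
  then show ?case
    using trig_poly.trig_poly_add_char[OF _ dual_cnj, of "\<lambda>x. cnj (g x)" c "cnj \<beta>"]
    by simp
qed (simp add: trig_poly_zero)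

lemma trig_poly_Re: "trig_poly g \<Longrightarrow> trig_poly (\<lambda>x. of_real (Re (g x)))"
  using trig_poly_scale[OF trig_poly_add[of g "\<lambda>x. cnj (g x)"], of "1/2"]
  by (simp add: trig_poly_cnj complex_add_cnj)

section \<open>Uniform approximation by trigonometric polynomials\<close>

definition alpha_prod :: "'a::topological_ab_group_add \<Rightarrow> ('a \<Rightarrow> complex, complex) prod_space" where
  "alpha_prod x = to_prod_space (alpha x)"

lemma continuous_on_alpha_prod: "continuous_on S alpha_prod"
  unfolding alpha_prod_def
  by (rule continuous_on_compose2[OF continuous_on_to_prod_space continuous_on_alpha]) auto

lemma coords_alpha_prod [simp]: "c \<in> dual \<Longrightarrow> coords (alpha_prod x) c = c x"
  by (simp add: alpha_prod_def alpha_def to_prod_space_inverse)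

lemma alpha_prod_eq_iff: "alpha_prod x = alpha_prod y \<longleftrightarrow> alpha x = alpha y"
  by (simp add: alpha_prod_def to_prod_space_inject)

lemma inj_on_alpha_prod: "inj_on alpha S \<Longrightarrow> inj_on alpha_prod S"
  by (simp add: inj_on_def alpha_prod_eq_iff)

lemma separating_real_trig_poly:
  assumes "y1 \<in> range alpha_prod" and "y2 \<in> range alpha_prod" and "y1 \<noteq> y2"
  obtains g :: "('a::topological_ab_group_add \<Rightarrow> complex, complex) prod_space \<Rightarrow> real"
  where "continuous_on UNIV g" "trig_poly (\<lambda>x. of_real (g (alpha_prod x)))" "g y1 \<noteq> g y2"
proof -
  obtain a b where ab: "y1 = alpha_prod a" "y2 = alpha_prod b"
    using assms(1,2) by blast
  then have "alpha a \<noteq> alpha b"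
    using assms(3) by (simp add: alpha_prod_eq_iff)
  then obtain c where c: "c \<in> dual" "c a \<noteq> c b"
    by (auto simp: alpha_def fun_eq_iff split: if_splits)
  obtain w where "Re (w * c a) \<noteq> Re (w * c b)"
  proof (cases "Re (c a) = Re (c b)")
    case True
    then have "Im (c a) \<noteq> Im (c b)"
      using c(2) complex_eqI by blast
    then show ?thesis
      by (intro that[of "- \<i>"]) simp
  qed (use that[of 1] in simp)
  then show ?thesis
    using trig_poly_Re[OF trig_poly_char[OF c(1), of w]] c(1) ab
    by (intro that[of "\<lambda>y. Re (w * coords y c)"]) (auto intro!: continuous_intros continuous_on_coords)
qed

lemma trig_poly_approx_real:
  fixes S :: "'a::topological_ab_group_add set"
    and f :: "('a \<Rightarrow> complex, complex) prod_space \<Rightarrow> real"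
  assumes "compact S" and "continuous_on (alpha_prod ` S) f" and "e > 0"
  obtains h where "trig_poly h" "\<forall>x\<in>S. cmod (of_real (f (alpha_prod x)) - h x) < e"
proof -
  define P where "P g \<longleftrightarrow> continuous_on (alpha_prod ` S) g \<and> trig_poly (\<lambda>x. of_real (g (alpha_prod x)))"
    for g
  have "\<exists>g. P g \<and> (\<forall>y\<in>alpha_prod ` S. \<bar>f y - g y\<bar> < e)"
  proof (rule Stone_Weierstrass_HOL[of "alpha_prod ` S" P])
    show "compact (alpha_prod ` S)"
      using assms(1) by (intro compact_continuous_image continuous_on_alpha_prod)
    show "P (\<lambda>y. c)" for c
      by (simp add: P_def trig_poly_const)
    show "P (\<lambda>y. g1 y + g2 y)" if "P g1 \<and> P g2" for g1 g2
      using that trig_poly_add[of "\<lambda>x. of_real (g1 (alpha_prod x))" "\<lambda>x. of_real (g2 (alpha_prod x))"]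
      by (simp add: P_def continuous_on_add)
    show "P (\<lambda>y. g1 y * g2 y)" if "P g1 \<and> P g2" for g1 g2
      using that trig_poly_mult[of "\<lambda>x. of_real (g1 (alpha_prod x))" "\<lambda>x. of_real (g2 (alpha_prod x))"]
      by (simp add: P_def continuous_on_mult)
    show "\<exists>g. P g \<and> g y1 \<noteq> g y2"
      if "y1 \<in> alpha_prod ` S \<and> y2 \<in> alpha_prod ` S \<and> y1 \<noteq> y2" for y1 y2
    proof -
      have "y1 \<in> range alpha_prod" "y2 \<in> range alpha_prod" "y1 \<noteq> y2"
        using that by auto
      then obtain g where g: "continuous_on UNIV g" "trig_poly (\<lambda>x. of_real (g (alpha_prod x)))"
        "g y1 \<noteq> g y2"
        by (rule separating_real_trig_poly) blast
      then have "P g"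
        unfolding P_def using continuous_on_subset[OF g(1) subset_UNIV] by blast
      with g(3) show ?thesis
        by blast
    qed
  qed (use assms in \<open>auto simp: P_def\<close>)
  then obtain g where "P g" and approx: "\<forall>y\<in>alpha_prod ` S. \<bar>f y - g y\<bar> < e"
    by blast
  show ?thesis
  proof (rule that[of "\<lambda>x. of_real (g (alpha_prod x))"])
    show "trig_poly (\<lambda>x. of_real (g (alpha_prod x)))"
      using \<open>P g\<close> by (simp add: P_def)
    show "\<forall>x\<in>S. cmod (of_real (f (alpha_prod x)) - of_real (g (alpha_prod x))) < e"
      using approx by (simp flip: of_real_diff)
  qed
qed

lemma trig_poly_approx:
  fixes S :: "'a::topological_ab_group_add set"
    and f :: "('a \<Rightarrow> complex, complex) prod_space \<Rightarrow> complex"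
  assumes "compact S" and f: "continuous_on (alpha_prod ` S) f" and "e > 0"
  obtains h where "trig_poly h" "\<forall>x\<in>S. cmod (f (alpha_prod x) - h x) < e"
proof -
  have "e / 2 > 0"
    using \<open>e > 0\<close> by simp
  obtain h1 where h1: "trig_poly h1" "\<forall>x\<in>S. cmod (of_real (Re (f (alpha_prod x))) - h1 x) < e / 2"
    using trig_poly_approx_real[OF \<open>compact S\<close> continuous_on_Re[OF f] \<open>e / 2 > 0\<close>] by blast
  obtain h2 where h2: "trig_poly h2" "\<forall>x\<in>S. cmod (of_real (Im (f (alpha_prod x))) - h2 x) < e / 2"
    using trig_poly_approx_real[OF \<open>compact S\<close> continuous_on_Im[OF f] \<open>e / 2 > 0\<close>] by blast
  show ?thesis
  proof (rule that[of "\<lambda>x. h1 x + \<i> * h2 x"])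
    show "trig_poly (\<lambda>x. h1 x + \<i> * h2 x)"
      using h1(1) h2(1) by (intro trig_poly_add trig_poly_scale)
    show "\<forall>x\<in>S. cmod (f (alpha_prod x) - (h1 x + \<i> * h2 x)) < e"
    proof
      fix x
      assume "x \<in> S"
      define z where "z = f (alpha_prod x)"
      have "z - (h1 x + \<i> * h2 x) = (of_real (Re z) - h1 x) + \<i> * (of_real (Im z) - h2 x)"
        by (subst complex_eq[of z]) (simp add: algebra_simps)
      then have "cmod (z - (h1 x + \<i> * h2 x)) \<le> cmod (of_real (Re z) - h1 x) + cmod (of_real (Im z) - h2 x)"
        by (metis norm_triangle_ineq norm_mult norm_ii mult_1)
      also have "\<dots> < e"
        using h1(2) h2(2) \<open>x \<in> S\<close> by (fastforce simp: z_def)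
      finally show "cmod (f (alpha_prod x) - (h1 x + \<i> * h2 x)) < e"
        by (simp add: z_def)
    qed
  qed
qed

lemma trig_poly_dense:
  fixes K :: "'a::topological_ab_group_add set"
  assumes "inj_on alpha K" and "compact K" and F: "continuous_on K F" and "e > 0"
  obtains h where "trig_poly h" "\<forall>x\<in>K. cmod (F x - h x) < e"
proof -
  have inj: "inj_on alpha_prod K"
    using assms(1) by (rule inj_on_alpha_prod)
  then have "continuous_on (alpha_prod ` K) (inv_into K alpha_prod)"
    using \<open>compact K\<close> by (intro continuous_on_inv continuous_on_alpha_prod) auto
  then have "continuous_on (alpha_prod ` K) (\<lambda>y. F (inv_into K alpha_prod y))"
    by (rule continuous_on_compose2[OF F]) (auto simp: inj)
  then obtain h where "trig_poly h" "\<forall>x\<in>K. cmod (F (inv_into K alpha_prod (alpha_prod x)) - h x) < e"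
    using trig_poly_approx[OF \<open>compact K\<close> _ \<open>e > 0\<close>] by blast
  with inj show ?thesis
    by (intro that[of h]) auto
qed

lemma trig_poly_separates_compacts:
  fixes K L :: "'a::topological_ab_group_add set"
  assumes "inj_on alpha (K \<union> L)" and "compact K" and "compact L" and "K \<inter> L = {}" and "e > 0"
  obtains h where "trig_poly h" "\<forall>x\<in>K. cmod (h x) < e" "\<forall>x\<in>L. cmod (1 - h x) < e"
proof -
  have disjoint: "alpha_prod ` K \<inter> alpha_prod ` L = {}"
    using inj_on_alpha_prod[OF assms(1)] \<open>K \<inter> L = {}\<close> by (auto simp: inj_on_def)
  have closed: "closed (alpha_prod ` K)" "closed (alpha_prod ` L)"
    using assms(2,3) by (auto intro: compact_imp_closed compact_continuous_image continuous_on_alpha_prod)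
  define f where "f y = (if y \<in> alpha_prod ` K then 0 else 1 :: complex)" for y
  have "continuous_on (alpha_prod ` K \<union> alpha_prod ` L) f"
  proof (rule continuous_on_closed_Un[OF closed])
    show "continuous_on (alpha_prod ` K) f"
      by (rule continuous_on_eq[OF continuous_on_const[of _ 0]]) (simp add: f_def)
    show "continuous_on (alpha_prod ` L) f"
      by (rule continuous_on_eq[OF continuous_on_const[of _ 1]]) (use disjoint in \<open>auto simp: f_def\<close>)
  qed
  moreover have "compact (K \<union> L)"
    using assms(2,3) by blast
  ultimately obtain h where "trig_poly h" and approx: "\<forall>x\<in>K \<union> L. cmod (f (alpha_prod x) - h x) < e"
    using trig_poly_approx[OF _ _ \<open>e > 0\<close>, of "K \<union> L" f] by (auto simp: image_Un)
  show ?thesis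
  proof (rule that[OF \<open>trig_poly h\<close>])
    show "\<forall>x\<in>K. cmod (h x) < e"
    proof
      fix x
      assume "x \<in> K"
      then show "cmod (h x) < e"
        using approx[rule_format, of x] by (simp add: f_def)
    qed
    show "\<forall>x\<in>L. cmod (1 - h x) < e"
    proof
      fix x
      assume "x \<in> L"
      then have "alpha_prod x \<notin> alpha_prod ` K"
        using disjoint by blast
      then show "cmod (1 - h x) < e"
        using approx[rule_format, of x] \<open>x \<in> L\<close> by (simp add: f_def norm_minus_commute)
    qed
  qed
qed

section \<open>Averaging along orbits\<close>

lemma norm_mean_powers_le_1:
  fixes z :: "'a::real_normed_field"
  assumes "norm z = 1"
  shows "norm ((\<Sum>j<N. z ^ j) / of_nat N) \<le> 1"
proof -
  have "norm (\<Sum>j<N. z ^ j) \<le> (\<Sum>j<N. norm (z ^ j))"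
    by (rule norm_sum)
  also have "\<dots> = real N"
    using assms by (simp add: norm_power)
  finally show ?thesis
    by (simp add: norm_divide divide_le_eq)
qed

lemma mean_powers_tendsto_0:
  fixes z :: "'a::real_normed_field"
  assumes "norm z = 1" and "z \<noteq> 1"
  shows "(\<lambda>N. (\<Sum>j<N. z ^ j) / of_nat N) \<longlonglongrightarrow> 0"
proof (rule Lim_null_comparison)
  have "norm (\<Sum>j<N. z ^ j) \<le> 2 / norm (1 - z)" for N
  proof -
    have "norm (1 - z ^ N) \<le> 2"
      using norm_triangle_ineq4[of 1 "z ^ N"] assms(1) by (simp add: norm_power)
    then show ?thesis
      using assms(2) by (simp add: sum_gp_strict norm_divide divide_right_mono)
  qed
  then show "\<forall>\<^sub>F N in sequentially. norm ((\<Sum>j<N. z ^ j) / of_nat N) \<le> 2 / norm (1 - z) / real N"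
    by (intro always_eventually allI) (simp add: norm_divide divide_right_mono del: divide_divide_eq_left)
  show "(\<lambda>N. 2 / norm (1 - z) / real N) \<longlonglongrightarrow> 0"
    by (rule lim_const_over_n)
qed

lemma approx_average_translates:
  fixes h0 :: "'a::ab_group_add \<Rightarrow> complex" and e :: "nat \<Rightarrow> 'a \<Rightarrow> complex"
  assumes S: "\<And>x. x \<in> S \<Longrightarrow> x + k \<in> S"
    and h0: "\<And>x. x \<in> S \<Longrightarrow> h0 (x + k) = h0 x"
    and e: "\<And>i x. x \<in> S \<Longrightarrow> e i (x + k) = e i x * e i k"
    and approx: "\<forall>x\<in>S. cmod (h0 x - (\<Sum>i<n. b i * e i x)) \<le> \<epsilon>"
    and "N > 0"
  shows "\<forall>x\<in>S. cmod (h0 x - (\<Sum>i<n. b i * ((\<Sum>j<N. e i k ^ j) / of_nat N) * e i x)) \<le> \<epsilon>"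
proof
  fix x
  assume "x \<in> S"
  define orbit where "orbit j = ((\<lambda>y. y + k) ^^ j) x" for j
  define s where "s i = (\<Sum>j<N. e i k ^ j)" for i
  have orbit: "orbit j \<in> S \<and> h0 (orbit j) = h0 x \<and> (\<forall>i. e i (orbit j) = e i x * e i k ^ j)" for j
    by (induction j) (simp_all add: orbit_def \<open>x \<in> S\<close> S h0 e)
  have "(\<Sum>j<N. h0 (orbit j) - (\<Sum>i<n. b i * e i (orbit j)))
      = (\<Sum>j<N. h0 x - (\<Sum>i<n. b i * e i x * e i k ^ j))"
    using orbit by (simp add: mult.assoc)
  also have "\<dots> = of_nat N * h0 x - (\<Sum>j<N. \<Sum>i<n. b i * e i x * e i k ^ j)"
    by (simp add: sum_subtractf)
  also have "(\<Sum>j<N. \<Sum>i<n. b i * e i x * e i k ^ j) = (\<Sum>i<n. b i * e i x * s i)"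
    unfolding s_def sum_distrib_left by (rule sum.swap)
  also have "(\<Sum>i<n. b i * e i x * s i) = of_nat N * (\<Sum>i<n. b i * (s i / of_nat N) * e i x)"
    unfolding sum_distrib_left using \<open>N > 0\<close> by (intro sum.cong) simp_all
  finally have "(\<Sum>j<N. h0 (orbit j) - (\<Sum>i<n. b i * e i (orbit j)))
      = of_nat N * (h0 x - (\<Sum>i<n. b i * (s i / of_nat N) * e i x))"
    by (simp add: right_diff_distrib)
  then have "real N * cmod (h0 x - (\<Sum>i<n. b i * (s i / of_nat N) * e i x))
      = cmod (\<Sum>j<N. h0 (orbit j) - (\<Sum>i<n. b i * e i (orbit j)))"
    by (simp add: norm_mult)
  also have "\<dots> \<le> (\<Sum>j<N. cmod (h0 (orbit j) - (\<Sum>i<n. b i * e i (orbit j))))"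
    by (rule norm_sum)
  also have "\<dots> \<le> (\<Sum>j<N. \<epsilon>)"
    using approx orbit by (intro sum_mono) blast
  finally show "cmod (h0 x - (\<Sum>i<n. b i * ((\<Sum>j<N. e i k ^ j) / of_nat N) * e i x)) \<le> \<epsilon>"
    using \<open>N > 0\<close> by (simp add: s_def)
qed

lemma shrink_coefficient:
  fixes h0 :: "'a::ab_group_add \<Rightarrow> complex" and e :: "nat \<Rightarrow> 'a \<Rightarrow> complex"
  assumes S: "\<And>x. x \<in> S \<Longrightarrow> x + k \<in> S"
    and h0: "\<And>x. x \<in> S \<Longrightarrow> h0 (x + k) = h0 x"
    and e: "\<And>i x. x \<in> S \<Longrightarrow> e i (x + k) = e i x * e i k"
    and norm_e: "\<And>i. cmod (e i k) = 1"
    and approx: "\<forall>x\<in>S. cmod (h0 x - (\<Sum>i<n. b i * e i x)) \<le> \<epsilon>"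
    and "e m k \<noteq> 1" and "\<delta> > 0"
  obtains b' where "\<forall>x\<in>S. cmod (h0 x - (\<Sum>i<n. b' i * e i x)) \<le> \<epsilon>"
    and "\<And>i. cmod (b' i) \<le> cmod (b i)" and "cmod (b' m) \<le> \<delta>"
proof -
  define mean where "mean i N = (\<Sum>j<N. e i k ^ j) / of_nat N" for i N
  have "(\<lambda>N. mean m N) \<longlonglongrightarrow> 0"
    unfolding mean_def by (rule mean_powers_tendsto_0[OF norm_e \<open>e m k \<noteq> 1\<close>])
  then have "(\<lambda>N. cmod (b m) * cmod (mean m N)) \<longlonglongrightarrow> 0"
    by (intro tendsto_mult_right_zero tendsto_norm_zero)
  then have "\<forall>\<^sub>F N in sequentially. N > 0 \<and> cmod (b m) * cmod (mean m N) < \<delta>"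
    using \<open>\<delta> > 0\<close> eventually_gt_at_top[of 0] by (auto dest: order_tendstoD(2) intro: eventually_conj)
  then obtain N where "N > 0" and N: "cmod (b m) * cmod (mean m N) < \<delta>"
    using eventually_happens'[OF sequentially_bot] by blast
  show ?thesis
  proof (rule that[of "\<lambda>i. b i * mean i N"])
    show "\<forall>x\<in>S. cmod (h0 x - (\<Sum>i<n. b i * mean i N * e i x)) \<le> \<epsilon>"
      unfolding mean_def using approx_average_translates[OF S h0 e approx \<open>N > 0\<close>] .
    show "cmod (b i * mean i N) \<le> cmod (b i)" for i
    proof -
      have "cmod (mean i N) \<le> 1"
        unfolding mean_def by (rule norm_mean_powers_le_1[OF norm_e])
      then show ?thesis
        by (simp add: norm_mult mult_left_le)
    qed
    show "cmod (b m * mean m N) \<le> \<delta>"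
      using N by (simp add: norm_mult)
  qed
qed

lemma shrink_nontrivial_coefficients:
  fixes h0 :: "'a::ab_group_add \<Rightarrow> complex" and e :: "nat \<Rightarrow> 'a \<Rightarrow> complex"
  assumes S: "\<And>x k. x \<in> S \<Longrightarrow> k \<in> K \<Longrightarrow> x + k \<in> S"
    and h0: "\<And>x k. x \<in> S \<Longrightarrow> k \<in> K \<Longrightarrow> h0 (x + k) = h0 x"
    and e: "\<And>i x k. x \<in> S \<Longrightarrow> k \<in> K \<Longrightarrow> e i (x + k) = e i x * e i k"
    and norm_e: "\<And>i k. k \<in> K \<Longrightarrow> cmod (e i k) = 1"
    and approx: "\<forall>x\<in>S. cmod (h0 x - (\<Sum>i<n. b i * e i x)) \<le> \<epsilon>"
    and "\<delta> > 0"
  obtains b' where "\<forall>x\<in>S. cmod (h0 x - (\<Sum>i<n. b' i * e i x)) \<le> \<epsilon>"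
    and "\<And>i. i < n \<Longrightarrow> (\<exists>k\<in>K. e i k \<noteq> 1) \<Longrightarrow> cmod (b' i) \<le> \<delta>"
proof -
  have "\<exists>b'. (\<forall>x\<in>S. cmod (h0 x - (\<Sum>i<n. b' i * e i x)) \<le> \<epsilon>)
      \<and> (\<forall>i<m. (\<exists>k\<in>K. e i k \<noteq> 1) \<longrightarrow> cmod (b' i) \<le> \<delta>)" for m
  proof (induction m)
    case 0
    show ?case
      using approx by (intro exI[of _ b]) simp
  next
    case (Suc m)
    then obtain b' where approx': "\<forall>x\<in>S. cmod (h0 x - (\<Sum>i<n. b' i * e i x)) \<le> \<epsilon>"
      and small: "\<forall>i<m. (\<exists>k\<in>K. e i k \<noteq> 1) \<longrightarrow> cmod (b' i) \<le> \<delta>"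
      by blast
    show ?case
    proof (cases "\<exists>k\<in>K. e m k \<noteq> 1")
      case False
      then show ?thesis
        using approx' small by (intro exI[of _ b']) (auto simp: less_Suc_eq)
    next
      case True
      then obtain k where "k \<in> K" "e m k \<noteq> 1"
        by blast
      obtain b'' where approx'': "\<forall>x\<in>S. cmod (h0 x - (\<Sum>i<n. b'' i * e i x)) \<le> \<epsilon>"
        and le: "\<And>i. cmod (b'' i) \<le> cmod (b' i)" and "cmod (b'' m) \<le> \<delta>"
        by (rule shrink_coefficient[of S k h0 e, OF S h0 e norm_e approx' \<open>e m k \<noteq> 1\<close> \<open>\<delta> > 0\<close>])
          (use \<open>k \<in> K\<close> in auto)
      have "cmod (b'' i) \<le> \<delta>" if "i < Suc m" "\<exists>k\<in>K. e i k \<noteq> 1" for i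
        using that small le[of i] \<open>cmod (b'' m) \<le> \<delta>\<close> by (auto simp: less_Suc_eq)
      then show ?thesis
        using approx'' by (intro exI[of _ b'']) simp
    qed
  qed
  from this[of n] show ?thesis
    using that by blast
qed

lemma norm_sum_small_coefficients:
  fixes b z :: "'i \<Rightarrow> 'a::real_normed_div_algebra" and \<delta> :: real
  assumes "\<And>i. i \<in> I \<Longrightarrow> norm (b i) \<le> \<delta>" and "\<And>i. i \<in> I \<Longrightarrow> norm (z i) = 1"
  shows "norm (\<Sum>i\<in>I. b i * z i) \<le> card I * \<delta>"
proof -
  have "norm (\<Sum>i\<in>I. b i * z i) \<le> (\<Sum>i\<in>I. norm (b i * z i))"
    by (rule norm_sum)
  also have "\<dots> \<le> (\<Sum>i\<in>I. \<delta>)"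
    using assms by (intro sum_mono) (simp add: norm_mult)
  finally show ?thesis
    by simp
qed

lemma approx_by_trivial_terms:
  fixes h0 :: "'a::ab_group_add \<Rightarrow> complex" and e :: "nat \<Rightarrow> 'a \<Rightarrow> complex"
  assumes "K \<subseteq> S"
    and S: "\<And>x k. x \<in> S \<Longrightarrow> k \<in> K \<Longrightarrow> x + k \<in> S"
    and h0: "\<And>x k. x \<in> S \<Longrightarrow> k \<in> K \<Longrightarrow> h0 (x + k) = h0 x"
    and e: "\<And>i x k. x \<in> S \<Longrightarrow> k \<in> K \<Longrightarrow> e i (x + k) = e i x * e i k"
    and norm_e: "\<And>i x. x \<in> S \<Longrightarrow> cmod (e i x) = 1"
    and approx: "\<forall>x\<in>S. cmod (h0 x - (\<Sum>i<n. b i * e i x)) \<le> \<epsilon>"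
    and "\<eta> > 0"
  obtains b' where
    "\<forall>x\<in>S. cmod (h0 x - (\<Sum>i | i < n \<and> (\<forall>k\<in>K. e i k = 1). b' i * e i x)) \<le> \<epsilon> + \<eta>"
proof -
  define \<delta> where "\<delta> = \<eta> / (real n + 1)"
  have "\<delta> > 0"
    using \<open>\<eta> > 0\<close> by (simp add: \<delta>_def)
  have norm_K: "cmod (e i k) = 1" if "k \<in> K" for i k
    using norm_e \<open>K \<subseteq> S\<close> that by blast
  obtain b' where approx': "\<forall>x\<in>S. cmod (h0 x - (\<Sum>i<n. b' i * e i x)) \<le> \<epsilon>"
    and small: "\<And>i. i < n \<Longrightarrow> (\<exists>k\<in>K. e i k \<noteq> 1) \<Longrightarrow> cmod (b' i) \<le> \<delta>"
    using shrink_nontrivial_coefficients[OF S h0 e norm_K approx \<open>\<delta> > 0\<close>] by blast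
  define T where "T = {i. i < n \<and> (\<forall>k\<in>K. e i k = 1)}"
  have "T \<subseteq> {..<n}"
    by (auto simp: T_def)
  show ?thesis
  proof (rule that[of b'], fold T_def, intro ballI)
    fix x
    assume "x \<in> S"
    have "cmod (\<Sum>i\<in>{..<n} - T. b' i * e i x) \<le> card ({..<n} - T) * \<delta>"
      using small norm_e[OF \<open>x \<in> S\<close>] by (intro norm_sum_small_coefficients) (auto simp: T_def)
    also have "\<dots> \<le> real n * \<delta>"
      using card_mono[of "{..<n}" "{..<n} - T"] \<open>\<delta> > 0\<close> by (simp add: mult_right_mono)
    also have "\<dots> \<le> \<eta>"
      using \<open>\<eta> > 0\<close> by (simp add: \<delta>_def field_simps)
    finally have "cmod (\<Sum>i\<in>{..<n} - T. b' i * e i x) \<le> \<eta>" .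
    have "h0 x - (\<Sum>i\<in>T. b' i * e i x)
        = (h0 x - (\<Sum>i<n. b' i * e i x)) + (\<Sum>i\<in>{..<n} - T. b' i * e i x)"
      using sum.subset_diff[OF \<open>T \<subseteq> {..<n}\<close>, of "\<lambda>i. b' i * e i x"] by simp
    then have "cmod (h0 x - (\<Sum>i\<in>T. b' i * e i x))
        \<le> cmod (h0 x - (\<Sum>i<n. b' i * e i x)) + cmod (\<Sum>i\<in>{..<n} - T. b' i * e i x)"
      by (metis norm_triangle_ineq)
    also have "\<dots> \<le> \<epsilon> + \<eta>"
      using approx' \<open>x \<in> S\<close> \<open>cmod (\<Sum>i\<in>{..<n} - T. b' i * e i x) \<le> \<eta>\<close> by (intro add_mono) auto
    finally show "cmod (h0 x - (\<Sum>i\<in>T. b' i * e i x)) \<le> \<epsilon> + \<eta>" .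
  qed
qed

lemma exists_trivial_term:
  fixes \<phi> :: "nat \<Rightarrow> 'a::ab_group_add \<Rightarrow> complex"
  assumes "is_subgroup K"
    and \<phi>: "\<And>i x k. x \<in> K \<Longrightarrow> k \<in> K \<Longrightarrow> \<phi> i (x + k) = \<phi> i x * \<phi> i k"
    and norm_\<phi>: "\<And>i x. x \<in> K \<Longrightarrow> cmod (\<phi> i x) = 1"
    and approx: "\<forall>x\<in>K. cmod (1 - (\<Sum>i<n. b i * \<phi> i x)) \<le> \<epsilon>" and "\<epsilon> < 1"
  shows "\<exists>i<n. \<forall>k\<in>K. \<phi> i k = 1"
proof (rule ccontr)
  assume none: "\<not> (\<exists>i<n. \<forall>k\<in>K. \<phi> i k = 1)"
  obtain b' where
    "\<forall>x\<in>K. cmod (1 - (\<Sum>i | i < n \<and> (\<forall>k\<in>K. \<phi> i k = 1). b' i * \<phi> i x)) \<le> \<epsilon> + (1 - \<epsilon>) / 2"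
    by (rule approx_by_trivial_terms[where S = K and \<eta> = "(1 - \<epsilon>) / 2", OF _ _ _ \<phi> norm_\<phi> approx])
      (use \<open>\<epsilon> < 1\<close> is_subgroupD[OF \<open>is_subgroup K\<close>] in auto)
  moreover have "{i. i < n \<and> (\<forall>k\<in>K. \<phi> i k = 1)} = {}"
    using none by auto
  ultimately have "1 \<le> \<epsilon> + (1 - \<epsilon>) / 2"
    using is_subgroupD(1)[OF \<open>is_subgroup K\<close>] by auto
  with \<open>\<epsilon> < 1\<close> show False
    by (simp add: field_simps)
qed

lemma approx_by_annihilator_chars:
  fixes K S :: "'a::topological_ab_group_add set" and h0 :: "'a \<Rightarrow> complex"
  assumes "K \<subseteq> S"
    and S: "\<And>x k. x \<in> S \<Longrightarrow> k \<in> K \<Longrightarrow> x + k \<in> S"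
    and h0: "\<And>x k. x \<in> S \<Longrightarrow> k \<in> K \<Longrightarrow> h0 (x + k) = h0 x"
    and "trig_poly h" and approx: "\<forall>x\<in>S. cmod (h0 x - h x) \<le> \<epsilon>" and "\<eta> > 0"
  obtains I :: "nat set" and b e where "\<And>i. i \<in> I \<Longrightarrow> e i \<in> dual \<and> (\<forall>k\<in>K. e i k = 1)"
    and "\<forall>x\<in>S. cmod (h0 x - (\<Sum>i\<in>I. b i * e i x)) \<le> \<epsilon> + \<eta>"
proof -
  obtain n :: nat and b e where e: "\<And>i. e i \<in> dual" and h: "h = (\<lambda>x. \<Sum>i<n. b i * e i x)"
    by (rule trig_polyE[OF \<open>trig_poly h\<close>]) blast
  obtain b' where "\<forall>x\<in>S. cmod (h0 x - (\<Sum>i | i < n \<and> (\<forall>k\<in>K. e i k = 1). b' i * e i x)) \<le> \<epsilon> + \<eta>"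
  proof (rule approx_by_trivial_terms[where \<eta> = \<eta>, OF \<open>K \<subseteq> S\<close> S h0 _ _ _ \<open>\<eta> > 0\<close>])
    show "e i (x + k) = e i x * e i k" and "cmod (e i x) = 1" for i x k
      using e by (simp_all add: dualD)
    show "\<forall>x\<in>S. cmod (h0 x - (\<Sum>i<n. b i * e i x)) \<le> \<epsilon>"
      using approx by (simp add: h)
  qed
  with e show ?thesis
    by (intro that[where I = "{i. i < n \<and> (\<forall>k\<in>K. e i k = 1)}" and b = b' and e = e]) auto
qed

section \<open>Compact subgroups\<close>

lemma dually_closed_compact_subgroup:
  fixes K :: "'a::topological_ab_group_add set"
  assumes "inj (alpha :: 'a \<Rightarrow> ('a \<Rightarrow> complex) \<Rightarrow> complex)" and "is_subgroup K" and "compact K"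
  shows "dually_closed K"
  unfolding dually_closed_def
proof
  show "K \<subseteq> polar_l (polar_r K)"
    by (auto simp: polar_l_def polar_r_def)
  show "polar_l (polar_r K) \<subseteq> K"
  proof (rule subsetI, rule ccontr)
    fix a
    assume a: "a \<in> polar_l (polar_r K)" and "a \<notin> K"
    have "0 \<in> K" and K_add: "\<And>x k. k \<in> K \<Longrightarrow> x + k \<in> K \<longleftrightarrow> x \<in> K"
      using \<open>is_subgroup K\<close> by (simp_all add: is_subgroupD subgroup_add_mem_iff)
    define L where "L = (+) a ` K"
    have "K \<inter> L = {}" and "a \<in> L"
      using K_add \<open>a \<notin> K\<close> \<open>0 \<in> K\<close> by (auto simp: L_def add.commute intro: image_eqI[of _ _ 0])
    have "compact L"
      unfolding L_def using \<open>compact K\<close> by (intro compact_continuous_image continuous_intros)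
    obtain h where "trig_poly h" and h_K: "\<forall>x\<in>K. cmod (h x) < 1/4"
      and h_L: "\<forall>x\<in>L. cmod (1 - h x) < 1/4"
      by (rule trig_poly_separates_compacts[where e = "1/4", OF inj_on_subset[OF assms(1)]
            \<open>compact K\<close> \<open>compact L\<close> \<open>K \<inter> L = {}\<close>]) auto
    define h0 where "h0 x = (if x \<in> K then 0 else 1 :: complex)" for x
    have approx: "\<forall>x\<in>K \<union> L. cmod (h0 x - h x) \<le> 1/4"
      using h_K h_L \<open>K \<inter> L = {}\<close> by (fastforce simp: h0_def)
    obtain I :: "nat set" and b e where e: "\<And>i. i \<in> I \<Longrightarrow> e i \<in> dual \<and> (\<forall>k\<in>K. e i k = 1)"
      and close: "\<forall>x\<in>K \<union> L. cmod (h0 x - (\<Sum>i\<in>I. b i * e i x)) \<le> 1/4 + 1/8"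
    proof (rule approx_by_annihilator_chars[where \<eta> = "1/8", OF _ _ _ \<open>trig_poly h\<close> approx])
      show "x + k \<in> K \<union> L" if "x \<in> K \<union> L" "k \<in> K" for x k
        using that K_add by (auto simp: L_def add.assoc)
      show "h0 (x + k) = h0 x" if "k \<in> K" for x k
        using K_add[OF that] by (simp add: h0_def)
    qed auto
    define g0 where "g0 = (\<Sum>i\<in>I. b i * e i 0)"
    have "(\<Sum>i\<in>I. b i * e i a) = g0"
      unfolding g0_def using char_trivial_on_polar_polar[OF a] e \<open>0 \<in> K\<close> by (intro sum.cong) auto
    then have "cmod (1 - g0) \<le> 3/8" and "cmod (0 - g0) \<le> 3/8"
      using close[rule_format, of a] close[rule_format, of 0] \<open>a \<in> L\<close> \<open>a \<notin> K\<close> \<open>0 \<in> K\<close>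
      by (simp_all add: h0_def g0_def)
    then show False
      using norm_triangle_ineq4[of "1 - g0" "0 - g0"] by simp
  qed
qed

lemma dually_embedded_compact_subgroup:
  fixes K :: "'a::topological_ab_group_add set"
  assumes "inj (alpha :: 'a \<Rightarrow> ('a \<Rightarrow> complex) \<Rightarrow> complex)" and "is_subgroup K" and "compact K"
  shows "dually_embedded K"
  unfolding dually_embedded_def
proof (intro allI impI)
  fix \<psi>
  assume "is_char K \<psi>"
  note norm_\<psi> = is_charD(2)[OF \<open>is_char K \<psi>\<close>] and \<psi>_add = is_charD(3)[OF \<open>is_char K \<psi>\<close>]
  have \<psi>_cnj: "\<psi> x * cnj (\<psi> x) = 1" if "x \<in> K" for x
    using norm_\<psi>[OF that] by (simp add: complex_norm_square[symmetric])
  obtain h where "trig_poly h" and h_K: "\<forall>x\<in>K. cmod (\<psi> x - h x) < 1/4"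
    by (rule trig_poly_dense[where e = "1/4", OF inj_on_subset[OF assms(1)] \<open>compact K\<close>
          is_charD(1)[OF \<open>is_char K \<psi>\<close>]]) auto
  obtain n :: nat and b e where e: "\<And>i. e i \<in> dual" and h: "h = (\<lambda>x. \<Sum>i<n. b i * e i x)"
    by (rule trig_polyE[OF \<open>trig_poly h\<close>]) blast
  define \<theta> where "\<theta> i x = e i x * cnj (\<psi> x)" for i x
  have approx: "\<forall>x\<in>K. cmod (1 - (\<Sum>i<n. b i * \<theta> i x)) \<le> 1/4"
  proof
    fix x
    assume "x \<in> K"
    then have "1 - (\<Sum>i<n. b i * \<theta> i x) = cnj (\<psi> x) * (\<psi> x - h x)"
      using \<psi>_cnj by (simp add: h \<theta>_def sum_distrib_left algebra_simps)
    then show "cmod (1 - (\<Sum>i<n. b i * \<theta> i x)) \<le> 1/4"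
      using less_imp_le[OF h_K[rule_format, OF \<open>x \<in> K\<close>]] norm_\<psi>[OF \<open>x \<in> K\<close>]
      by (simp add: norm_mult)
  qed
  have "\<exists>i<n. \<forall>k\<in>K. \<theta> i k = 1"
  proof (rule exists_trivial_term[OF \<open>is_subgroup K\<close> _ _ approx])
    show "\<theta> i (x + k) = \<theta> i x * \<theta> i k" if "x \<in> K" "k \<in> K" for i x k
      using that e by (simp add: \<theta>_def \<psi>_add dualD)
    show "cmod (\<theta> i x) = 1" if "x \<in> K" for i x
      using that e norm_\<psi> by (simp add: \<theta>_def norm_mult dualD)
  qed simp
  then obtain i where "\<forall>k\<in>K. \<theta> i k = 1"
    by blast
  then have "\<forall>k\<in>K. e i k = \<psi> k"
    using \<psi>_cnj by (auto simp: \<theta>_def) (metis mult.assoc mult.commute mult_1)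
  with e show "\<exists>d\<in>dual. \<forall>x\<in>K. d x = \<psi> x"
    by blast
qed

theorem mainTheorem15:
  fixes K :: "'a::topological_ab_group_add set"
  assumes "inj (alpha :: 'a \<Rightarrow> ('a \<Rightarrow> complex) \<Rightarrow> complex)"
    and "is_subgroup K"
    and "compact K"
  shows "dually_closed K \<and> dually_embedded K"
  using dually_closed_compact_subgroup[OF assms] dually_embedded_compact_subgroup[OF assms] by blast

end
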